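(* Let $a,b\in\mathbb{N}$ with $b\ge 2$ and $a=b(b-1)$. Then for every integer $k\ge 2$ there exists an integer $H_k\ge1$ (depending on $a,b,k$) such that for every integer $n\ge 0$, the induced subgraph $G_{a,b,a,b-1}[\{n+1,\ldots,n+H_k\}]$ contains a clique on $k$ vertices. In particular $\omega(G_{a,b,a,b-1})=\infty$.
   Context: $\mathbb{N}=\{1,2,\dots\}$. $R_{a,b,a,b-1} := \left\{ \frac{an+b}{an+b-1} : n \in \mathbb{N} \right\}$; $G_{a,b,a,b-1}$ is the graph with vertex set $\mathbb{N}$ and edge set $\{\{m,n\}: m/n\in R_{a,b,a,b-1}\}$. For $W\subseteq\mathbb{N}$, $G[W]$ is the induced subgraph on $W$. $\omega$ denotes clique number. *)

theory Defs
  imports Complex_Main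
begin

definition ratio_set :: "nat \<Rightarrow> nat \<Rightarrow> nat \<Rightarrow> nat \<Rightarrow> real set" where
  "ratio_set a b c d = {(real a * real t + real b) / (real c * real t + real d) | t. t \<ge> 1}"

definition G_adj :: "nat \<Rightarrow> nat \<Rightarrow> nat \<Rightarrow> nat \<Rightarrow> nat \<Rightarrow> nat \<Rightarrow> bool" where
  "G_adj a b c d m n \<longleftrightarrow> m \<ge> 1 \<and> n \<ge> 1 \<and>
     (real m / real n \<in> ratio_set a b c d \<or> real n / real m \<in> ratio_set a b c d)"

definition G_clique :: "nat \<Rightarrow> nat \<Rightarrow> nat \<Rightarrow> nat \<Rightarrow> nat set \<Rightarrow> bool" where
  "G_clique a b c d S \<longleftrightarrow> S \<subseteq> {1..} \<and>
     (\<forall>m\<in>S. \<forall>n\<in>S. m \<noteq> n \<longrightarrow> G_adj a b c d m n)"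

end

theory Submission
  imports Defs "HOL-Number_Theory.Cong"
begin

text \<open>Call n < m pre-adjacent if b(m - n) divides m and (b - 1)(m - n) divides n; with
  a = b(b - 1) this says m/n = (at + b)/(at + b - 1) for some t \<ge> 0, i.e. the edge relation
  of G with t = 0 allowed. Translating a pre-adjacent pair by a positive multiple of a(m - n)
  increases t by at least one, so translating a pre-clique S by the first multiple of a\<Prod>S
  beyond n yields a clique of G inside a window of length (a + 1)\<Prod>S above n.

  Scale S so that all its elements are
  multiples of b, translate it by c and add a new smallest element z. For z to be pre-adjacent
  to every c + s we take z = \<beta>Pv and c = \<beta> + z, where \<beta> = (b - 1)Y with Y coprime to b and
  \<Prod>S dividing Y b^e, P = \<Prod>(s + \<beta>) (coprime to b), and P v \<equiv> -1 modulo b^(e + 1);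
  the same congruence makes c divisible by a\<Prod>S, so that translating by c keeps S a pre-clique.\<close>

lemma obtain_coprime_cofactor:
  fixes n b :: nat
  assumes "0 < n"
  obtains Y e where "0 < Y" and "coprime Y b" and "n dvd Y * b ^ e"
  using assms
proof (induction n arbitrary: thesis rule: less_induct)
  case (less n)
  show ?case
  proof (cases "coprime n b")
    case True
    then show ?thesis using less.prems by simp
  next
    case False
    define p where "p = gcd n b"
    have "p dvd n" by (simp add: p_def)
    then obtain n' where n': "n = p * n'" unfolding dvd_def by blast
    have "p \<noteq> 1" "p > 0"
      using False less.prems(2) unfolding p_def coprime_iff_gcd_eq_1 by auto
    moreover have "n' > 0"
      using less.prems(2) n' by (cases n') auto
    ultimately have "n' < n" using n' by simp
    then obtain Y e where "0 < Y" "coprime Y b" "n' dvd Y * b ^ e"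
      using less.IH \<open>n' > 0\<close> by blast
    moreover have "p * n' dvd b * (Y * b ^ e)"
      using \<open>n' dvd Y * b ^ e\<close> by (simp add: p_def mult_dvd_mono)
    ultimately show ?thesis
      using less.prems(1)[of Y "Suc e"] n' by (simp add: ac_simps)
  qed
qed

lemma coprime_add_dvd_left:
  fixes s t b :: nat
  assumes "b dvd s" and "coprime t b"
  shows "coprime (s + t) b"
proof (cases "b = 0")
  case True
  then show ?thesis using assms by simp
next
  case False
  obtain k where "s = b * k" using assms(1) by (elim dvdE)
  then have "coprime ((s + t) mod b) b"
    using assms(2) False by simp
  then show ?thesis
    using False by simp
qed

lemma obtain_mult_plus_one_dvd:
  fixes P M :: nat
  assumes "coprime P M" and "0 < M"
  obtains v where "M dvd P * v + 1"
proof -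
  obtain x where "[P * x = 1] (mod M)"
    using cong_solve_coprime_nat[OF assms(1)] by auto
  then have "[P * (x * (M - 1)) + 1 = 1 * (M - 1) + 1] (mod M)"
    unfolding mult.assoc[symmetric] by (intro cong_add cong_mult cong_refl)
  then have "[P * (x * (M - 1)) + 1 = 0] (mod M)"
    using assms(2) by (simp add: cong_def)
  then show ?thesis
    using that cong_0_iff by blast
qed

lemma exists_multiple_in_window:
  fixes N n :: nat
  assumes "0 < N"
  obtains Q where "N dvd Q" and "n < Q" and "Q \<le> n + N"
proof
  show "N dvd (n div N + 1) * N" by simp
  have "N * (n div N) + n mod N = n" by (rule mult_div_mod_eq)
  moreover have "n mod N < N" using assms by simp
  moreover have "(n div N + 1) * N = N * (n div N) + N" by simp
  ultimately show "n < (n div N + 1) * N" "(n div N + 1) * N \<le> n + N"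
    by linarith+
qed

lemma G_adj_commute: "G_adj a b c d m n \<longleftrightarrow> G_adj a b c d n m"
  unfolding G_adj_def by blast

lemma G_adj_multiple:
  assumes "0 < e" and "1 \<le> t" and "1 \<le> a"
  shows "G_adj a b a c (e * (a * t + b)) (e * (a * t + c))"
proof -
  have "real (e * (a * t + b)) / real (e * (a * t + c))
      = (real a * real t + real b) / (real a * real t + real c)"
    using assms(1) by simp
  then have "real (e * (a * t + b)) / real (e * (a * t + c)) \<in> ratio_set a b a c"
    unfolding ratio_set_def using assms(2) by blast
  moreover have "1 \<le> e * (a * t + b)" "1 \<le> e * (a * t + c)"
    using assms by (auto simp: Suc_le_eq)
  ultimately show ?thesis
    unfolding G_adj_def by blast
qed

definition pre_adj :: "nat \<Rightarrow> nat \<Rightarrow> nat \<Rightarrow> bool" where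
  "pre_adj b n m \<longleftrightarrow> n < m \<and> b * (m - n) dvd m \<and> (b - 1) * (m - n) dvd n"

lemma pre_adj_param:
  assumes "b \<ge> 2" and "pre_adj b n m"
  obtains t where "m = (m - n) * (b * (b - 1) * t + b)"
    and "n = (m - n) * (b * (b - 1) * t + (b - 1))"
proof -
  define d where "d = m - n"
  have "n < m" "b * d dvd m" "(b - 1) * d dvd n"
    using assms(2) unfolding pre_adj_def d_def by auto
  then obtain u w where u: "m = b * d * u" and w: "n = (b - 1) * d * w"
    by (meson dvdE)
  have "d > 0" using \<open>n < m\<close> d_def by simp
  have "m = n + d" using \<open>n < m\<close> d_def by simp
  then have "d * (b * u) = d * ((b - 1) * w + 1)"
    using u w by (simp add: algebra_simps)
  then have uw: "b * u = (b - 1) * w + 1"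
    using \<open>d > 0\<close> by (metis mult_left_cancel not_gr0)
  obtain c where c: "b = Suc c" "c \<ge> 1"
    using assms(1) by (cases b) auto
  have "u \<le> w"
  proof (rule ccontr)
    assume "\<not> u \<le> w"
    then have "c * w + c \<le> c * u"
      using mult_le_mono2[of "w + 1" u c] by simp
    moreover have "u > 0" using uw by (cases u) auto
    ultimately show False using uw c by simp
  qed
  then obtain t where t: "w = u + t"
    using le_Suc_ex by blast
  have "u = c * t + 1"
    using uw c unfolding t by (simp add: algebra_simps)
  then have "m = d * (b * (b - 1) * t + b)" and "n = d * (b * (b - 1) * t + (b - 1))"
    using u w c t by (simp_all add: algebra_simps)
  then show ?thesis
    using that[of t] unfolding d_def by blast
qed

lemma G_adj_add_of_pre_adj:
  assumes "b \<ge> 2" and a: "a = b * (b - 1)" and "pre_adj b n m"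
    and "0 < Q" and "a * (m - n) dvd Q"
  shows "G_adj a b a (b - 1) (m + Q) (n + Q)"
proof -
  define d where "d = m - n"
  obtain t where mt: "m = d * (a * t + b)" and nt: "n = d * (a * t + (b - 1))"
    using pre_adj_param[OF assms(1,3)] unfolding a d_def by blast
  obtain q where q: "Q = a * d * q"
    using assms(5) unfolding d_def by blast
  have "0 < d" "1 \<le> q" "1 \<le> a"
    using q \<open>0 < Q\<close> assms(1) a by (auto intro: Suc_leI)
  then have "G_adj a b a (b - 1) (d * (a * (t + q) + b)) (d * (a * (t + q) + (b - 1)))"
    by (intro G_adj_multiple) auto
  moreover have "d * (a * (t + q) + b) = m + Q" "d * (a * (t + q) + (b - 1)) = n + Q"
    unfolding mt nt q by (simp_all add: algebra_simps)
  ultimately show ?thesis by simp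
qed

lemma pre_adj_add:
  assumes "pre_adj b n m" and "b * (b - 1) * n dvd c"
  shows "pre_adj b (n + c) (m + c)"
proof -
  have "n < m" and hm: "b * (m - n) dvd m" and hn: "(b - 1) * (m - n) dvd n"
    using assms(1) unfolding pre_adj_def by auto
  have "b * (b - 1) * (m - n) dvd b * (b - 1) * n"
    using dvd_mult_right[OF hn] by (rule mult_dvd_mono[OF dvd_refl])
  then have c: "b * (b - 1) * (m - n) dvd c"
    using assms(2) by (rule dvd_trans)
  have "b * (m - n) dvd b * (b - 1) * (m - n)" "(b - 1) * (m - n) dvd b * (b - 1) * (m - n)"
    by (simp_all add: mult.assoc)
  then have "b * (m - n) dvd c" "(b - 1) * (m - n) dvd c"
    using c by (auto intro: dvd_trans)
  then show ?thesis
    using \<open>n < m\<close> hm hn unfolding pre_adj_def by simp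
qed

lemma pre_adj_mult:
  assumes "pre_adj b n m" and "0 < k"
  shows "pre_adj b (k * n) (k * m)"
  using assms unfolding pre_adj_def
  by (auto simp: diff_mult_distrib2[symmetric] mult.left_commute[of _ k])

lemma pre_adj_below_add:
  assumes "(b - 1) dvd \<beta>" and "0 < \<beta>" and "b dvd s"
    and z: "z = \<beta> * ((s + \<beta>) * R)" and "b dvd (s + \<beta>) * R + 1"
  shows "pre_adj b z (\<beta> + z + s)"
proof -
  have "b dvd s * R + (\<beta> * R + 1)"
    using assms(5) by (simp add: algebra_simps)
  moreover have "b dvd s * R"
    using \<open>b dvd s\<close> by simp
  ultimately have "b dvd \<beta> * R + 1"
    by (simp only: dvd_add_right_iff)
  then have "b * (s + \<beta>) dvd (\<beta> * R + 1) * (s + \<beta>)"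
    by (rule mult_dvd_mono) simp
  also have "\<dots> = \<beta> + z + s"
    unfolding z by (simp add: algebra_simps)
  finally have "b * (s + \<beta>) dvd \<beta> + z + s" .
  moreover have "(b - 1) * (s + \<beta>) dvd z"
    unfolding z using assms(1) by (simp add: mult_dvd_mono)
  moreover have "z < \<beta> + z + s" and "\<beta> + z + s - z = s + \<beta>"
    using \<open>0 < \<beta>\<close> by simp_all
  ultimately show ?thesis
    unfolding pre_adj_def by (simp add: add.commute)
qed

definition pre_clique :: "nat \<Rightarrow> nat set \<Rightarrow> bool" where
  "pre_clique b S \<longleftrightarrow> (\<forall>m\<in>S. \<forall>n\<in>S. n < m \<longrightarrow> pre_adj b n m)"

lemma pre_clique_image_mult:
  assumes "pre_clique b S" and "0 < k"
  shows "pre_clique b ((*) k ` S)"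
  using assms unfolding pre_clique_def by (auto intro: pre_adj_mult)

lemma pre_clique_image_add:
  assumes "pre_clique b S" and "\<forall>s\<in>S. b * (b - 1) * s dvd c"
  shows "pre_clique b ((+) c ` S)"
  using assms unfolding pre_clique_def by (auto simp: add.commute[of c] intro: pre_adj_add)

lemma pre_clique_insert:
  assumes "pre_clique b S" and "\<forall>m\<in>S. pre_adj b z m"
  shows "pre_clique b (insert z S)"
  using assms unfolding pre_clique_def pre_adj_def by auto

lemma G_clique_image_add:
  assumes "b \<ge> 2" and "a = b * (b - 1)" and "pre_clique b S"
    and "0 < Q" and "\<forall>s\<in>S. a * s dvd Q"
  shows "G_clique a b a (b - 1) ((+) Q ` S)"
proof -
  have adj: "G_adj a b a (b - 1) (Q + m) (Q + n)" if "m \<in> S" "n \<in> S" "n < m" for m n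
  proof -
    have "pre_adj b n m"
      using assms(3) that unfolding pre_clique_def by blast
    then have "a * (m - n) dvd a * n"
      unfolding pre_adj_def by (auto intro: mult_dvd_mono dvd_mult_right)
    moreover have "a * n dvd Q"
      using assms(5) that(2) by blast
    ultimately have "a * (m - n) dvd Q"
      by (rule dvd_trans)
    then show ?thesis
      using G_adj_add_of_pre_adj[OF assms(1,2) \<open>pre_adj b n m\<close> assms(4)]
      by (simp add: add.commute)
  qed
  show ?thesis
    unfolding G_clique_def
  proof (intro conjI ballI impI)
    show "(+) Q ` S \<subseteq> {1..}" using assms(4) by auto
  next
    fix x y assume "x \<in> (+) Q ` S" "y \<in> (+) Q ` S" "x \<noteq> y"
    then obtain m n where "m \<in> S" "n \<in> S" "x = Q + m" "y = Q + n" "m \<noteq> n"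
      by blast
    then show "G_adj a b a (b - 1) x y"
      using adj G_adj_commute by (cases m n rule: linorder_cases) blast+
  qed
qed

lemma extension_offsets:
  fixes b Y e v \<beta> z :: nat and S :: "nat set"
  assumes \<beta>_def: "\<beta> = (b - 1) * Y" and z_def: "z = \<beta> * ((\<Prod>s\<in>S. s + \<beta>) * v)"
    and "finite S" and "\<forall>s\<in>S. b dvd s" and "0 < \<beta>"
    and "\<Prod>S dvd Y * b ^ e" and v: "b ^ Suc e dvd (\<Prod>s\<in>S. s + \<beta>) * v + 1"
  shows "\<forall>s\<in>S. b * (b - 1) * s dvd \<beta> + z"
    and "\<forall>s\<in>S. pre_adj b z (\<beta> + z + s)"
proof -
  define P where "P = (\<Prod>s\<in>S. s + \<beta>)"
  have "b * (b - 1) * s dvd \<beta> + z" if "s \<in> S" for s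
  proof -
    have "s dvd \<Prod>S"
      using assms(3) that by (rule dvd_prodI)
    also have "\<dots> dvd Y * b ^ e" by fact
    finally have "b * s dvd Y * b ^ Suc e"
      by (simp add: mult.left_commute[of b])
    also have "\<dots> dvd Y * (P * v + 1)"
      using v unfolding P_def by (rule mult_dvd_mono[OF dvd_refl])
    finally have "(b - 1) * (b * s) dvd (b - 1) * (Y * (P * v + 1))"
      by simp
    then show ?thesis
      by (simp add: \<beta>_def z_def P_def algebra_simps)
  qed
  moreover have "pre_adj b z (\<beta> + z + s)" if "s \<in> S" for s
  proof (rule pre_adj_below_add)
    show "(b - 1) dvd \<beta>" "0 < \<beta>" "b dvd s"
      using assms(4,5) that by (simp_all add: \<beta>_def)
    have P: "P = (s + \<beta>) * (\<Prod>t\<in>S - {s}. t + \<beta>)"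
      unfolding P_def using assms(3) that by (simp add: prod.remove)
    then show "z = \<beta> * ((s + \<beta>) * ((\<Prod>t\<in>S - {s}. t + \<beta>) * v))"
      unfolding z_def P_def[symmetric] by (simp add: mult.assoc)
    have "b dvd b ^ Suc e" by simp
    then have "b dvd P * v + 1" using v unfolding P_def by (rule dvd_trans)
    then show "b dvd (s + \<beta>) * ((\<Prod>t\<in>S - {s}. t + \<beta>) * v) + 1"
      using P by (simp add: mult.assoc)
  qed
  ultimately show "\<forall>s\<in>S. b * (b - 1) * s dvd \<beta> + z" "\<forall>s\<in>S. pre_adj b z (\<beta> + z + s)"
    by blast+
qed

lemma obtain_extension_offsets:
  fixes b :: nat and S :: "nat set"
  assumes "b \<ge> 2" and "finite S" and S: "\<forall>s\<in>S. 0 < s \<and> b dvd s"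
  obtains \<beta> z where "0 < \<beta>" and "0 < z"
    and "\<forall>s\<in>S. b * (b - 1) * s dvd \<beta> + z"
    and "\<forall>s\<in>S. pre_adj b z (\<beta> + z + s)"
proof -
  have "0 < \<Prod>S" using assms(2) S by (simp add: prod_pos)
  then obtain Y e where "0 < Y" "coprime Y b" and L: "\<Prod>S dvd Y * b ^ e"
    by (rule obtain_coprime_cofactor)
  define \<beta> where "\<beta> = (b - 1) * Y"
  define P where "P = (\<Prod>s\<in>S. s + \<beta>)"
  have "0 < \<beta>" using assms(1) \<open>0 < Y\<close> by (simp add: \<beta>_def)
  have "coprime \<beta> b"
    using \<open>coprime Y b\<close> coprime_diff_one_left_nat[of b] assms(1) by (simp add: \<beta>_def)
  then have "coprime P (b ^ Suc e)"
    unfolding P_def using S by (simp add: prod_coprime_left coprime_add_dvd_left)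
  moreover have "0 < b ^ Suc e" using assms(1) by simp
  ultimately obtain v where v: "b ^ Suc e dvd P * v + 1"
    by (rule obtain_mult_plus_one_dvd)
  have "b ^ 1 \<le> b ^ Suc e"
    using assms(1) by (intro power_increasing) auto
  then have "0 < v" using v assms(1) by (cases v) auto
  moreover have "0 < P" unfolding P_def using \<open>0 < \<beta>\<close> by (simp add: prod_pos)
  ultimately have "0 < \<beta> * (P * v)" using \<open>0 < \<beta>\<close> by simp
  have "\<forall>s\<in>S. b dvd s" using S by blast
  from extension_offsets[OF \<beta>_def refl assms(2) this \<open>0 < \<beta>\<close> L v[unfolded P_def]]
  show ?thesis
    using that \<open>0 < \<beta>\<close> \<open>0 < \<beta> * (P * v)\<close> unfolding P_def by blast
qed

lemma pre_clique_extend: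
  assumes "b \<ge> 2" and "finite S" and "0 \<notin> S" and "pre_clique b S"
  obtains T where "finite T" and "card T = Suc (card S)" and "0 \<notin> T" and "pre_clique b T"
proof -
  define S' where "S' = (*) b ` S"
  have "finite S'" "card S' = card S" "pre_clique b S'"
    using assms pre_clique_image_mult[OF assms(4)] unfolding S'_def
    by (auto simp: card_image inj_on_def)
  moreover have "\<forall>s\<in>S'. 0 < s \<and> b dvd s"
    using assms(1,3) unfolding S'_def by (auto intro: gr0I)
  ultimately obtain \<beta> z where "0 < \<beta>" "0 < z"
    and "\<forall>s\<in>S'. b * (b - 1) * s dvd \<beta> + z" and "\<forall>s\<in>S'. pre_adj b z (\<beta> + z + s)"
    using obtain_extension_offsets[OF assms(1)] by metis
  define T where "T = insert z ((+) (\<beta> + z) ` S')"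
  have "z \<notin> (+) (\<beta> + z) ` S'"
    using \<open>0 < \<beta>\<close> by auto
  then have "card T = Suc (card S)"
    unfolding T_def using \<open>finite S'\<close> \<open>card S' = card S\<close> by (simp add: card_image)
  moreover have "pre_clique b T"
    unfolding T_def using \<open>pre_clique b S'\<close> \<open>\<forall>s\<in>S'. b * (b - 1) * s dvd \<beta> + z\<close>
      \<open>\<forall>s\<in>S'. pre_adj b z (\<beta> + z + s)\<close>
    by (intro pre_clique_insert pre_clique_image_add) (auto simp: add.assoc)
  moreover have "finite T" "0 \<notin> T"
    unfolding T_def using \<open>finite S'\<close> \<open>0 < z\<close> by auto
  ultimately show ?thesis using that by blast
qed

lemma pre_clique_exists:
  assumes "b \<ge> 2"
  obtains S where "finite S" and "card S = k" and "0 \<notin> S" and "pre_clique b S"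
proof (induction k arbitrary: thesis)
  case 0
  then show ?case by (simp add: pre_clique_def)
next
  case (Suc k)
  then obtain S where "finite S" "card S = k" "0 \<notin> S" "pre_clique b S" by blast
  then show ?case
    using pre_clique_extend[OF assms] Suc.prems by metis
qed

lemma G_clique_in_every_window:
  assumes "b \<ge> 2" and "a = b * (b - 1)"
  shows "\<exists>H \<ge> 1. \<forall>n. \<exists>S. S \<subseteq> {n + 1..n + H} \<and> card S = k \<and> G_clique a b a (b - 1) S"
proof -
  obtain S where "finite S" "card S = k" "0 \<notin> S" "pre_clique b S"
    using pre_clique_exists[OF assms(1)] .
  define L where "L = \<Prod>S"
  have "0 < L" unfolding L_def using \<open>finite S\<close> \<open>0 \<notin> S\<close> by (auto intro: prod_pos gr0I)
  have L_dvd: "s dvd L" if "s \<in> S" for s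
    unfolding L_def using \<open>finite S\<close> that by (rule dvd_prodI)
  have "0 < a * L" using assms \<open>0 < L\<close> by simp
  have "\<exists>S'. S' \<subseteq> {n + 1..n + (a * L + L)} \<and> card S' = k \<and> G_clique a b a (b - 1) S'" for n
  proof -
    obtain Q where "a * L dvd Q" "n < Q" "Q \<le> n + a * L"
      using \<open>0 < a * L\<close> by (rule exists_multiple_in_window)
    have "\<forall>s\<in>S. a * s dvd Q"
    proof
      fix s assume "s \<in> S"
      then have "a * s dvd a * L" by (simp add: L_dvd)
      then show "a * s dvd Q" using \<open>a * L dvd Q\<close> by (rule dvd_trans)
    qed
    then have "G_clique a b a (b - 1) ((+) Q ` S)"
      using G_clique_image_add[OF assms \<open>pre_clique b S\<close>] \<open>n < Q\<close> by simp
    moreover have "(+) Q ` S \<subseteq> {n + 1..n + (a * L + L)}"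
    proof
      fix x assume "x \<in> (+) Q ` S"
      then obtain s where "s \<in> S" "x = Q + s" by blast
      moreover have "s \<le> L" using L_dvd[OF \<open>s \<in> S\<close>] \<open>0 < L\<close> by (rule dvd_imp_le)
      ultimately show "x \<in> {n + 1..n + (a * L + L)}"
        using \<open>n < Q\<close> \<open>Q \<le> n + a * L\<close> by simp
    qed
    moreover have "card ((+) Q ` S) = k"
      using \<open>card S = k\<close> by (simp add: card_image)
    ultimately show ?thesis by blast
  qed
  then show ?thesis by (intro exI[of _ "a * L + L"]) (use \<open>0 < L\<close> in auto)
qed

theorem proposition3p4:
  fixes a b :: nat
  assumes "a \<ge> 1" and "b \<ge> 2" and "a = b * (b - 1)"
  shows "(\<forall>k::nat. k \<ge> 2 \<longrightarrow> (\<exists>H::nat. H \<ge> 1 \<and>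
            (\<forall>n::nat. \<exists>S. S \<subseteq> {n+1..n+H} \<and> card S = k \<and>
                 G_clique a b a (b - 1) S)))
       \<and> (\<forall>k::nat. \<exists>S. finite S \<and> card S = k \<and> G_clique a b a (b - 1) S)"
proof (intro conjI allI impI)
  fix k :: nat
  show "\<exists>H \<ge> 1. \<forall>n. \<exists>S. S \<subseteq> {n + 1..n + H} \<and> card S = k \<and> G_clique a b a (b - 1) S"
    using G_clique_in_every_window[OF assms(2,3)] .
next
  fix k :: nat
  obtain H where "\<forall>n. \<exists>S. S \<subseteq> {n + 1..n + H} \<and> card S = k \<and> G_clique a b a (b - 1) S"
    using G_clique_in_every_window[OF assms(2,3)] by blast
  then obtain S where "S \<subseteq> {1..H}" "card S = k" "G_clique a b a (b - 1) S"
    by (metis add_0)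
  moreover have "finite S" using \<open>S \<subseteq> {1..H}\<close> by (rule finite_subset) simp
  ultimately show "\<exists>S. finite S \<and> card S = k \<and> G_clique a b a (b - 1) S"
    by blast
qed

end
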